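(* Let $\Sigma=b^2M_nQ\Psi Q^\top M_n\in\mathbb R^{n\times n}$ be the steady-state covariance of the observables (notation in the context), with $n\ge2$. Then for every $i\in\{1,\dots,n\}$, the $(n-1)\times(n-1)$ principal submatrix obtained from $\Sigma$ by deleting its $i$-th row and $i$-th column is invertible; consequently every principal submatrix of $\Sigma$ of size at most $n-1$ is invertible.
   Context: $L$ is the Laplacian of a connected undirected simple graph with positive edge weights, $L=Q\Lambda Q^\top$, $Q=[q_1|\dots|q_n]$ orthogonal, $q_1=\mathbf 1_n/\sqrt n$, $\Lambda=\mathrm{diag}(0,\lambda_2,\dots,\lambda_n)$ with $0<\lambda_2\le\dots\le\lambda_n$; the delay satisfies $0\le\tau<\pi/(2\lambda_n)$; $b\neq0$; $M_n=I_n-\frac1n\mathbf 1_n\mathbf 1_n^\top$; $\Psi=\mathrm{diag}(0,\psi(\lambda_2),\dots,\psi(\lambda_n))$ with $\psi(\lambda)=\frac{\cos(\lambda\tau)}{2\lambda(1-\sin(\lambda\tau))}$. *)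

theory Defs
  imports "Jordan_Normal_Form.Determinant" "Jordan_Normal_Form.DL_Submatrix"
begin

text \<open>Vertices are 0..n-1. A weighted undirected simple graph is given by a weight
  function w: w i j > 0 iff {i,j} is an edge, w i j = 0 otherwise.\<close>

definition weighted_simple_graph :: "nat \<Rightarrow> (nat \<Rightarrow> nat \<Rightarrow> real) \<Rightarrow> bool" where
  "weighted_simple_graph n w \<longleftrightarrow>
     (\<forall>i<n. \<forall>j<n. w i j = w j i \<and> w i j \<ge> 0) \<and> (\<forall>i<n. w i i = 0)"

definition graph_connected :: "nat \<Rightarrow> (nat \<Rightarrow> nat \<Rightarrow> real) \<Rightarrow> bool" where
  "graph_connected n w \<longleftrightarrow>
     (\<forall>i<n. \<forall>j<n. (\<lambda>a b. a < n \<and> b < n \<and> w a b > 0)\<^sup>*\<^sup>* i j)"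

definition laplacian :: "nat \<Rightarrow> (nat \<Rightarrow> nat \<Rightarrow> real) \<Rightarrow> real mat" where
  "laplacian n w = mat n n (\<lambda>(i,j). if i = j then (\<Sum>k<n. w i k) else - w i j)"

definition centering_mat :: "nat \<Rightarrow> real mat" where
  "centering_mat n = 1\<^sub>m n - mat n n (\<lambda>_. 1 / real n)"

definition psi :: "real \<Rightarrow> real \<Rightarrow> real" where
  "psi \<tau> x = cos (x * \<tau>) / (2 * x * (1 - sin (x * \<tau>)))"

text \<open>Psi = diag(0, psi(lambda_2), ..., psi(lambda_n)); eigenvalues indexed 0..n-1.\<close>
definition Psi_mat :: "nat \<Rightarrow> real \<Rightarrow> (nat \<Rightarrow> real) \<Rightarrow> real mat" where
  "Psi_mat n \<tau> lam = mat_diag n (\<lambda>k. if k = 0 then 0 else psi \<tau> (lam k))"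

definition steady_cov :: "nat \<Rightarrow> real \<Rightarrow> real \<Rightarrow> real mat \<Rightarrow> (nat \<Rightarrow> real) \<Rightarrow> real mat" where
  "steady_cov n b \<tau> Q lam =
     (b^2) \<cdot>\<^sub>m (centering_mat n * Q * Psi_mat n \<tau> lam * Q\<^sup>T * centering_mat n)"

end

theory Submission
  imports Defs
begin

(* Writing z = Q\<^sup>T M x, the quadratic form of the covariance is
   x \<bullet> \<Sigma> x = b\<^sup>2 (\<psi>(\<lambda>_2) z_2\<^sup>2 + ... + \<psi>(\<lambda>_n) z_n\<^sup>2), and every \<psi>(\<lambda>_k) is positive
   because 0 < \<lambda>_k \<tau> < \<pi>/2. So x is isotropic only if M x is orthogonal to q_2, ..., q_n;
   as M x has zero sum it is also orthogonal to q_1, hence M x = 0 and x is constant.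
   A principal submatrix omitting the index j is P\<^sup>T \<Sigma> P for a coordinate embedding P.
   If v is in its kernel, P v is isotropic for \<Sigma> and vanishes at j, so P v = 0 and v = 0. *)

lemma invertible_mat_if_mult_vec_inj:
  fixes A :: "'a :: field mat"
  assumes A: "A \<in> carrier_mat n n"
    and inj: "\<And>v. v \<in> carrier_vec n \<Longrightarrow> A *\<^sub>v v = 0\<^sub>v n \<Longrightarrow> v = 0\<^sub>v n"
  shows "invertible_mat A"
proof -
  have "det A \<noteq> 0"
    using inj det_0_iff_vec_prod_zero_field[OF A] by blast
  then have "A \<in> Units (ring_mat TYPE('a) n ())"
    by (rule det_non_zero_imp_unit[OF A])
  then obtain B where "B \<in> carrier_mat n n" "A * B = 1\<^sub>m n" "B * A = 1\<^sub>m n"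
    by (auto simp: Units_def ring_mat_simps)
  then show ?thesis
    using A by (auto simp: invertible_mat_def inverts_mat_def)
qed

lemma quadratic_form_congruence:
  fixes A C :: "'a :: comm_semiring_0 mat"
  assumes A: "A \<in> carrier_mat n n" and C: "C \<in> carrier_mat n m" and x: "x \<in> carrier_vec m"
  shows "x \<bullet> ((C\<^sup>T * A * C) *\<^sub>v x) = (C *\<^sub>v x) \<bullet> (A *\<^sub>v (C *\<^sub>v x))"
proof -
  have y: "A *\<^sub>v (C *\<^sub>v x) \<in> carrier_vec n"
    using A C x by simp
  have "(C\<^sup>T * A * C) *\<^sub>v x = (C\<^sup>T * A) *\<^sub>v (C *\<^sub>v x)"
    using A C x by (intro assoc_mult_mat_vec) auto
  also have "\<dots> = C\<^sup>T *\<^sub>v (A *\<^sub>v (C *\<^sub>v x))"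
    using A C x by (intro assoc_mult_mat_vec) auto
  finally have "x \<bullet> ((C\<^sup>T * A * C) *\<^sub>v x) = x \<bullet> (C\<^sup>T *\<^sub>v (A *\<^sub>v (C *\<^sub>v x)))"
    by simp
  also have "\<dots> = (C\<^sup>T *\<^sub>v (A *\<^sub>v (C *\<^sub>v x))) \<bullet> x"
    using A C x by (intro comm_scalar_prod[OF x]) simp
  also have "\<dots> = (A *\<^sub>v (C *\<^sub>v x)) \<bullet> (C *\<^sub>v x)"
    by (rule transpose_vec_mult_scalar[OF C x y])
  also have "\<dots> = (C *\<^sub>v x) \<bullet> (A *\<^sub>v (C *\<^sub>v x))"
    using C x by (intro comm_scalar_prod[OF y]) simp
  finally show ?thesis .
qed

definition selection_mat :: "nat \<Rightarrow> nat \<Rightarrow> (nat \<Rightarrow> nat) \<Rightarrow> 'a :: zero_neq_one mat" where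
  "selection_mat n m g = mat n m (\<lambda>(i, k). if i = g k then 1 else 0)"

lemma selection_mat_carrier [simp]: "selection_mat n m g \<in> carrier_mat n m"
  by (simp add: selection_mat_def)

lemma mult_selection_mat:
  fixes C :: "'a :: semiring_1 mat"
  assumes C: "C \<in> carrier_mat r n" and g: "\<And>k. k < m \<Longrightarrow> g k < n"
  shows "C * selection_mat n m g = mat r m (\<lambda>(i, k). C $$ (i, g k))"
  using C g by (intro eq_matI)
    (auto simp: selection_mat_def scalar_prod_def mult.commute[of _ "if _ then _ else _"] if_distrib
      cong: if_cong)

lemma transpose_selection_mat_mult:
  fixes C :: "'a :: semiring_1 mat"
  assumes C: "C \<in> carrier_mat n r" and g: "\<And>k. k < m \<Longrightarrow> g k < n"
  shows "(selection_mat n m g)\<^sup>T * C = mat m r (\<lambda>(k, j). C $$ (g k, j))"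
  using C g by (intro eq_matI)
    (auto simp: selection_mat_def scalar_prod_def if_distrib if_distribR cong: if_cong)

lemma principal_submatrix_eq_congruence:
  fixes A :: "'a :: semiring_1 mat"
  assumes A: "A \<in> carrier_mat n n" and g: "\<And>k. k < m \<Longrightarrow> g k < n"
  shows "mat m m (\<lambda>(k, l). A $$ (g k, g l)) = (selection_mat n m g)\<^sup>T * A * selection_mat n m g"
proof -
  let ?P = "selection_mat n m g :: 'a mat"
  have "?P\<^sup>T * A * ?P = ?P\<^sup>T * (A * ?P)"
    using A by (intro assoc_mult_mat[of _ m n _ n _ m]) auto
  also have "\<dots> = ?P\<^sup>T * mat n m (\<lambda>(i, l). A $$ (i, g l))"
    by (simp add: mult_selection_mat[OF A g])
  also have "\<dots> = mat m m (\<lambda>(k, l). mat n m (\<lambda>(i, l). A $$ (i, g l)) $$ (g k, l))"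
    by (rule transpose_selection_mat_mult[OF _ g]) simp
  also have "\<dots> = mat m m (\<lambda>(k, l). A $$ (g k, g l))"
    using g by (intro eq_matI) auto
  finally show ?thesis ..
qed

lemma transpose_selection_mat_mult_self:
  assumes g: "\<And>k. k < m \<Longrightarrow> g k < n" and inj: "inj_on g {..<m}"
  shows "(selection_mat n m g)\<^sup>T * selection_mat n m g = (1\<^sub>m m :: 'a :: semiring_1 mat)"
proof -
  have "(selection_mat n m g)\<^sup>T * selection_mat n m g
      = mat m m (\<lambda>(k, l). (selection_mat n m g :: 'a mat) $$ (g k, l))"
    by (rule transpose_selection_mat_mult[OF selection_mat_carrier g])
  also have "\<dots> = 1\<^sub>m m"
    using g inj by (intro eq_matI) (auto simp: selection_mat_def inj_on_def)
  finally show ?thesis .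
qed

lemma selection_mat_mult_vec_outside:
  assumes "v \<in> carrier_vec m" "j < n" "j \<notin> g ` {..<m}"
  shows "(selection_mat n m g *\<^sub>v v) $ j = (0 :: 'a :: semiring_1)"
  using assms by (auto simp: selection_mat_def scalar_prod_def intro!: sum.neutral)

definition isotropic_vectors_constant :: "nat \<Rightarrow> 'a :: comm_ring_1 mat \<Rightarrow> bool" where
  "isotropic_vectors_constant n A \<longleftrightarrow>
     (\<forall>x \<in> carrier_vec n. x \<bullet> (A *\<^sub>v x) = 0 \<longrightarrow> (\<forall>i<n. \<forall>j<n. x $ i = x $ j))"

lemma invertible_principal_submatrix:
  fixes A :: "'a :: field mat"
  assumes A: "A \<in> carrier_mat n n"
    and iso: "isotropic_vectors_constant n A"
    and g: "\<And>k. k < m \<Longrightarrow> g k < n" "inj_on g {..<m}"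
    and j: "j < n" "j \<notin> g ` {..<m}"
  shows "invertible_mat (mat m m (\<lambda>(k, l). A $$ (g k, g l)))"
proof (rule invertible_mat_if_mult_vec_inj)
  let ?P = "selection_mat n m g :: 'a mat"
  fix v assume v: "v \<in> carrier_vec m" and Bv: "mat m m (\<lambda>(k, l). A $$ (g k, g l)) *\<^sub>v v = 0\<^sub>v m"
  have Pv_carrier: "?P *\<^sub>v v \<in> carrier_vec n"
    by (rule mult_mat_vec_carrier[OF selection_mat_carrier v])
  have "(?P *\<^sub>v v) \<bullet> (A *\<^sub>v (?P *\<^sub>v v)) = v \<bullet> ((?P\<^sup>T * A * ?P) *\<^sub>v v)"
    using quadratic_form_congruence[OF A selection_mat_carrier v] by simp
  also have "\<dots> = 0"
    using v Bv by (simp add: principal_submatrix_eq_congruence[OF A g(1)])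
  finally have const: "\<forall>i<n. \<forall>i'<n. (?P *\<^sub>v v) $ i = (?P *\<^sub>v v) $ i'"
    using iso Pv_carrier unfolding isotropic_vectors_constant_def by blast
  have Pv: "?P *\<^sub>v v = 0\<^sub>v n"
  proof (rule eq_vecI)
    fix i assume "i < dim_vec (0\<^sub>v n)"
    then show "(?P *\<^sub>v v) $ i = 0\<^sub>v n $ i"
      using const[rule_format, of i j] j(1) selection_mat_mult_vec_outside[OF v j] by simp
  qed (simp add: selection_mat_def)
  have "v = (?P\<^sup>T * ?P) *\<^sub>v v"
    using v by (simp add: transpose_selection_mat_mult_self[OF g])
  also have "\<dots> = ?P\<^sup>T *\<^sub>v (?P *\<^sub>v v)"
    using v by (intro assoc_mult_mat_vec[of _ m n]) auto
  also have "\<dots> = 0\<^sub>v m"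
    unfolding Pv by (intro eq_vecI) (auto simp: selection_mat_def)
  finally show "v = 0\<^sub>v m" .
qed (simp add: mat_carrier)

lemma invertible_mat_delete_diag:
  fixes A :: "'a :: field mat"
  assumes A: "A \<in> carrier_mat n n"
    and iso: "isotropic_vectors_constant n A"
    and i: "i < n"
  shows "invertible_mat (mat_delete A i i)"
proof -
  define g where "g k = (if k < i then k else Suc k)" for k
  have "mat_delete A i i = mat (n - 1) (n - 1) (\<lambda>(k, l). A $$ (g k, g l))"
    using A by (simp add: mat_delete_def g_def)
  also have "invertible_mat \<dots>"
  proof (intro invertible_principal_submatrix[OF A iso])
    show "g k < n" if "k < n - 1" for k
      using that by (auto simp: g_def)
    show "inj_on g {..<n - 1}"
      by (rule inj_onI) (simp add: g_def split: if_splits)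
    show "i \<notin> g ` {..<n - 1}"
      by (auto simp: g_def)
  qed (fact i)
  finally show ?thesis .
qed

lemma invertible_submatrix_proper:
  fixes A :: "'a :: field mat"
  assumes A: "A \<in> carrier_mat n n"
    and iso: "isotropic_vectors_constant n A"
    and S: "S \<subset> {..<n}"
  shows "invertible_mat (submatrix A S S)"
proof -
  obtain j where j: "j < n" "j \<notin> S"
    using S by auto
  have pick: "pick S k \<in> S" if "k < card S" for k
    using that by (rule pick_in_set_le)
  have "{i. i < n \<and> i \<in> S} = S"
    using S by auto
  then have "submatrix A S S = mat (card S) (card S) (\<lambda>(k, l). A $$ (pick S k, pick S l))"
    using A by (simp add: submatrix_def)
  also have "invertible_mat \<dots>"
  proof (intro invertible_principal_submatrix[OF A iso])
    show "pick S k < n" if "k < card S" for k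
      using pick[OF that] S by auto
    show "inj_on (pick S) {..<card S}"
      by (rule inj_onI) (metis lessThan_iff nat_neq_iff pick_mono_le)
    show "j \<notin> pick S ` {..<card S}"
      using pick j(2) by auto
  qed (fact j(1))
  finally show ?thesis .
qed

lemma isotropic_vectors_constant_smult:
  fixes A :: "'a :: idom mat"
  assumes A: "A \<in> carrier_mat n n" and c: "c \<noteq> 0" and iso: "isotropic_vectors_constant n A"
  shows "isotropic_vectors_constant n (c \<cdot>\<^sub>m A)"
  unfolding isotropic_vectors_constant_def
proof (intro ballI impI)
  fix x assume x: "x \<in> carrier_vec n" and form: "x \<bullet> ((c \<cdot>\<^sub>m A) *\<^sub>v x) = 0"
  have "(c \<cdot>\<^sub>m A) *\<^sub>v x = c \<cdot>\<^sub>v (A *\<^sub>v x)"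
    using A x by (intro eq_vecI) simp_all
  then have "c * (x \<bullet> (A *\<^sub>v x)) = 0"
    using form A x by simp
  then have "x \<bullet> (A *\<^sub>v x) = 0"
    using c by simp
  with iso x show "\<forall>i<n. \<forall>j<n. x $ i = x $ j"
    unfolding isotropic_vectors_constant_def by blast
qed

lemma mat_diag_mult_vec:
  assumes "z \<in> carrier_vec n"
  shows "mat_diag n f *\<^sub>v z = vec n (\<lambda>k. f k * z $ k)"
proof (rule eq_vecI)
  fix k assume "k < dim_vec (vec n (\<lambda>k. f k * z $ k))"
  then have k: "k < n"
    by simp
  have "(mat_diag n f *\<^sub>v z) $ k = (\<Sum>j<n. (if k = j then f j else 0) * z $ j)"
    using assms k by (auto simp: mat_diag_def scalar_prod_def lessThan_atLeast0 intro!: sum.cong)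
  also have "\<dots> = (\<Sum>j<n. if k = j then f j * z $ j else 0)"
    by (intro sum.cong) simp_all
  also have "\<dots> = f k * z $ k"
    using k by simp
  finally show "(mat_diag n f *\<^sub>v z) $ k = vec n (\<lambda>k. f k * z $ k) $ k"
    using k by simp
qed (simp add: mat_diag_def)

lemma diag_quadratic_form:
  fixes f :: "nat \<Rightarrow> 'a :: comm_semiring_1"
  assumes "z \<in> carrier_vec n"
  shows "z \<bullet> (mat_diag n f *\<^sub>v z) = (\<Sum>k<n. f k * z $ k ^ 2)"
  using assms by (simp add: mat_diag_mult_vec scalar_prod_def lessThan_atLeast0 power2_eq_square
      mult.left_commute)

lemma diag_quadratic_form_eq_0_imp:
  fixes f :: "nat \<Rightarrow> 'a :: linordered_idom"
  assumes z: "z \<in> carrier_vec n" and f: "\<And>k. k < n \<Longrightarrow> 0 \<le> f k"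
    and form: "z \<bullet> (mat_diag n f *\<^sub>v z) = 0" and k: "k < n" "0 < f k"
  shows "z $ k = 0"
proof -
  have "(\<Sum>k<n. f k * z $ k ^ 2) = 0"
    using form by (simp add: diag_quadratic_form[OF z])
  then have "f k * z $ k ^ 2 = 0"
    using f k(1) by (subst (asm) sum_nonneg_eq_0_iff) auto
  then show ?thesis
    using k(2) by simp
qed

lemma eq_0_if_orthogonal_to_cols:
  fixes Q :: "'a :: field mat"
  assumes Q: "Q \<in> carrier_mat n n" "Q\<^sup>T * Q = 1\<^sub>m n" and w: "w \<in> carrier_vec n"
    and orth: "\<And>k. k < n \<Longrightarrow> col Q k \<bullet> w = 0"
  shows "w = 0\<^sub>v n"
proof -
  have QTw: "Q\<^sup>T *\<^sub>v w = 0\<^sub>v n"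
    using Q(1) orth by (intro eq_vecI) auto
  have "Q * Q\<^sup>T = 1\<^sub>m n"
    using mat_mult_left_right_inverse[of "Q\<^sup>T" n Q] Q by simp
  then have "w = (Q * Q\<^sup>T) *\<^sub>v w"
    using w by simp
  also have "\<dots> = Q *\<^sub>v (Q\<^sup>T *\<^sub>v w)"
    using Q(1) w by (intro assoc_mult_mat_vec) auto
  also have "\<dots> = 0\<^sub>v n"
    using Q(1) by (auto simp: QTw)
  finally show ?thesis .
qed

lemma centering_mat_carrier [simp]: "centering_mat n \<in> carrier_mat n n"
  by (auto simp: centering_mat_def)

lemma transpose_centering_mat [simp]: "(centering_mat n)\<^sup>T = centering_mat n"
  by (intro eq_matI) (auto simp: centering_mat_def)

lemma centered_congruence_eq:
  assumes Q: "Q \<in> carrier_mat n n" and D: "D \<in> carrier_mat n n"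
  shows "centering_mat n * Q * D * Q\<^sup>T * centering_mat n
    = (Q\<^sup>T * centering_mat n)\<^sup>T * D * (Q\<^sup>T * centering_mat n)"
proof -
  have "(Q\<^sup>T * centering_mat n)\<^sup>T = centering_mat n * Q"
    using Q by (simp add: transpose_mult[of _ n n _ n])
  moreover have "centering_mat n * Q * D * Q\<^sup>T * centering_mat n
      = centering_mat n * Q * D * (Q\<^sup>T * centering_mat n)"
    by (intro assoc_mult_mat[of _ n n _ n _ n] mult_carrier_mat[of _ n n] centering_mat_carrier)
      (use Q D in auto)
  ultimately show ?thesis
    by simp
qed

lemma centering_mat_mult_vec:
  assumes "x \<in> carrier_vec n" "i < n"
  shows "(centering_mat n *\<^sub>v x) $ i = x $ i - (\<Sum>j<n. x $ j) / real n"
proof -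
  have "(centering_mat n *\<^sub>v x) $ i = (\<Sum>j<n. (if i = j then x $ j else 0) - x $ j / real n)"
    using assms by (auto simp: centering_mat_def mult_mat_vec_def scalar_prod_def algebra_simps
        lessThan_atLeast0 intro!: sum.cong)
  also have "\<dots> = x $ i - (\<Sum>j<n. x $ j) / real n"
    using assms by (simp add: sum_subtractf sum_divide_distrib)
  finally show ?thesis .
qed

lemma sum_centering_mat_mult_vec:
  assumes "x \<in> carrier_vec n"
  shows "(\<Sum>i<n. (centering_mat n *\<^sub>v x) $ i) = 0"
proof -
  have "(\<Sum>i<n. (centering_mat n *\<^sub>v x) $ i) = (\<Sum>i<n. x $ i - (\<Sum>j<n. x $ j) / real n)"
    using assms by (intro sum.cong) (auto simp: centering_mat_mult_vec)
  also have "\<dots> = 0"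
    by (cases "n = 0") (simp_all add: sum_subtractf)
  finally show ?thesis .
qed

lemma isotropic_vectors_constant_centered_congruence:
  assumes Q: "Q \<in> carrier_mat n n" "Q\<^sup>T * Q = 1\<^sub>m n"
    and Q0: "col Q 0 = vec n (\<lambda>_. 1 / sqrt (real n))"
    and f: "\<And>k. k < n \<Longrightarrow> 0 \<le> f k" "\<And>k. 0 < k \<Longrightarrow> k < n \<Longrightarrow> 0 < f k"
  shows "isotropic_vectors_constant n (centering_mat n * Q * mat_diag n f * Q\<^sup>T * centering_mat n)"
  unfolding isotropic_vectors_constant_def
proof (intro ballI impI)
  let ?M = "centering_mat n"
  fix x assume x: "x \<in> carrier_vec n"
    and form: "x \<bullet> ((?M * Q * mat_diag n f * Q\<^sup>T * ?M) *\<^sub>v x) = 0"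
  define C where "C = Q\<^sup>T * ?M"
  define w where "w = ?M *\<^sub>v x"
  have C: "C \<in> carrier_mat n n"
    using Q(1) by (simp add: C_def)
  have w: "w \<in> carrier_vec n"
    unfolding w_def by (rule mult_mat_vec_carrier[OF centering_mat_carrier x])
  have "(C *\<^sub>v x) \<bullet> (mat_diag n f *\<^sub>v (C *\<^sub>v x)) = 0"
    using form quadratic_form_congruence[OF mat_diag_dim C x]
    unfolding centered_congruence_eq[OF Q(1) mat_diag_dim] C_def by simp
  moreover have Cx: "C *\<^sub>v x = Q\<^sup>T *\<^sub>v w"
    unfolding C_def w_def
    by (rule assoc_mult_mat_vec[OF _ centering_mat_carrier x]) (use Q(1) in simp)
  ultimately have form_coords: "(Q\<^sup>T *\<^sub>v w) \<bullet> (mat_diag n f *\<^sub>v (Q\<^sup>T *\<^sub>v w)) = 0"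
    by simp
  have coords: "col Q k \<bullet> w = 0" if k: "0 < k" "k < n" for k
  proof -
    have "(Q\<^sup>T *\<^sub>v w) $ k = 0"
      by (rule diag_quadratic_form_eq_0_imp[OF _ f(1) form_coords k(2) f(2)[OF k]])
        (use Q(1) w in simp_all)
    then show ?thesis
      using Q(1) k(2) by simp
  qed
  have "col Q 0 \<bullet> w = (\<Sum>i<n. w $ i) / sqrt (real n)"
    using w Q0 by (simp add: scalar_prod_def lessThan_atLeast0 sum_divide_distrib)
  then have "col Q 0 \<bullet> w = 0"
    using sum_centering_mat_mult_vec[OF x] by (simp add: w_def)
  with coords have "col Q k \<bullet> w = 0" if "k < n" for k
    using that by (cases "k = 0") auto
  then have "w = 0\<^sub>v n"
    by (rule eq_0_if_orthogonal_to_cols[OF Q w])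
  then have mean: "x $ i = (\<Sum>j<n. x $ j) / real n" if "i < n" for i
    using centering_mat_mult_vec[OF x that] that by (simp add: w_def)
  show "\<forall>i<n. \<forall>j<n. x $ i = x $ j"
    using mean by metis
qed

lemma psi_pos:
  assumes "0 < x" "0 \<le> x * \<tau>" "x * \<tau> < pi / 2"
  shows "0 < psi \<tau> x"
proof -
  have cos: "0 < cos (x * \<tau>)"
    using assms by (intro cos_gt_zero_pi) auto
  have "sin (x * \<tau>) \<noteq> 1"
  proof
    assume "sin (x * \<tau>) = 1"
    then have "cos (x * \<tau>) * cos (x * \<tau>) = 0"
      using sin_cos_squared_add3[of "x * \<tau>"] by simp
    with cos show False
      by simp
  qed
  then have "sin (x * \<tau>) < 1"
    using sin_le_one[of "x * \<tau>"] by linarith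
  then show ?thesis
    using assms cos by (simp add: psi_def)
qed

lemma steady_cov_carrier:
  assumes "Q \<in> carrier_mat n n"
  shows "steady_cov n b \<tau> Q lam \<in> carrier_mat n n"
  unfolding steady_cov_def Psi_mat_def
  by (intro smult_carrier_mat mult_carrier_mat[of _ n n] centering_mat_carrier mat_diag_dim)
    (use assms in auto)

lemma steady_cov_isotropic_vectors_constant:
  assumes Q: "Q \<in> carrier_mat n n" "Q\<^sup>T * Q = 1\<^sub>m n"
    and Q0: "col Q 0 = vec n (\<lambda>_. 1 / sqrt (real n))"
    and lam: "0 < lam 1" "\<And>i j. 1 \<le> i \<Longrightarrow> i \<le> j \<Longrightarrow> j < n \<Longrightarrow> lam i \<le> lam j"
    and \<tau>: "0 \<le> \<tau>" "\<tau> < pi / (2 * lam (n - 1))"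
    and b: "b \<noteq> 0"
  shows "isotropic_vectors_constant n (steady_cov n b \<tau> Q lam)"
proof -
  define f where "f = (\<lambda>k. if k = 0 then 0 else psi \<tau> (lam k))"
  have f_pos: "0 < f k" if k: "0 < k" "k < n" for k
  proof -
    have "0 < lam k"
      using lam(1) lam(2)[of 1 k] k by simp
    have "lam k \<le> lam (n - 1)"
      using lam(2)[of k "n - 1"] k by simp
    moreover have "lam (n - 1) * \<tau> < pi / 2"
      using \<tau>(2) \<open>0 < lam k\<close> calculation by (simp add: pos_less_divide_eq mult.commute)
    ultimately have "lam k * \<tau> < pi / 2"
      using mult_right_mono[OF _ \<tau>(1)] by (meson le_less_trans)
    then show ?thesis
      using k \<open>0 < lam k\<close> \<tau>(1) psi_pos[of "lam k" \<tau>] by (simp add: f_def)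
  qed
  have f_nonneg: "0 \<le> f k" if "k < n" for k
  proof (cases "k = 0")
    case True
    then show ?thesis
      by (simp add: f_def)
  next
    case False
    then show ?thesis
      using f_pos[of k] that by simp
  qed
  have "isotropic_vectors_constant n (centering_mat n * Q * mat_diag n f * Q\<^sup>T * centering_mat n)"
    by (rule isotropic_vectors_constant_centered_congruence[OF Q Q0 f_nonneg f_pos])
  moreover have "centering_mat n * Q * mat_diag n f * Q\<^sup>T * centering_mat n \<in> carrier_mat n n"
    by (intro mult_carrier_mat[of _ n n] centering_mat_carrier mat_diag_dim) (use Q(1) in auto)
  ultimately show ?thesis
    using b unfolding steady_cov_def Psi_mat_def f_def[symmetric]
    by (intro isotropic_vectors_constant_smult) simp_all
qed

theorem lemma2:
  fixes n :: nat and w :: "nat \<Rightarrow> nat \<Rightarrow> real" and Q :: "real mat"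
    and lam :: "nat \<Rightarrow> real" and \<tau> b :: real
  assumes n2: "n \<ge> 2"
    and graph: "weighted_simple_graph n w"
    and conn: "graph_connected n w"
    and Qc: "Q \<in> carrier_mat n n"
    and Qorth: "Q\<^sup>T * Q = 1\<^sub>m n"
    and Q1: "col Q 0 = vec n (\<lambda>_. 1 / sqrt (real n))"
    and lam0: "lam 0 = 0"
    and lam1: "0 < lam 1"
    and lam_sorted: "\<And>i j. 1 \<le> i \<Longrightarrow> i \<le> j \<Longrightarrow> j < n \<Longrightarrow> lam i \<le> lam j"
    and spec: "laplacian n w = Q * mat_diag n lam * Q\<^sup>T"
    and tau0: "0 \<le> \<tau>"
    and tau1: "\<tau> < pi / (2 * lam (n - 1))"
    and b: "b \<noteq> 0"
  shows "(\<forall>i<n. invertible_mat (mat_delete (steady_cov n b \<tau> Q lam) i i))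
       \<and> (\<forall>S. S \<subseteq> {..<n} \<longrightarrow> card S \<le> n - 1 \<longrightarrow>
              invertible_mat (submatrix (steady_cov n b \<tau> Q lam) S S))"
proof -
  let ?\<Sigma> = "steady_cov n b \<tau> Q lam"
  have \<Sigma>: "?\<Sigma> \<in> carrier_mat n n"
    by (rule steady_cov_carrier[OF Qc])
  have iso: "isotropic_vectors_constant n ?\<Sigma>"
    by (rule steady_cov_isotropic_vectors_constant[OF Qc Qorth Q1 lam1 lam_sorted tau0 tau1 b])
  have "S \<subset> {..<n}" if "S \<subseteq> {..<n}" "card S \<le> n - 1" for S
  proof -
    have "card S < card {..<n}"
      using that(2) n2 by simp
    then show ?thesis
      using that(1) by auto
  qed
  then show ?thesis
    using invertible_mat_delete_diag[OF \<Sigma> iso] invertible_submatrix_proper[OF \<Sigma> iso] by blast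
qed

end
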